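(* Let $L$ be an infinite set and let $Q$ be either the edgeless cube $Q_L$ or the edged cube $\bar Q_L$. If $\vec\sigma$ is a universally convergent basic sequence and $\vec\tau$ is a basic sequence with $\vec\sigma\sim\vec\tau$, then $\vec\tau$ is universally convergent.
   Context: Let $L$ be an infinite set, $-L=\{-r:r\in L\}$ a disjoint copy of $L$, and $0$ a new element; $L^\dagger=-L\cup\{0\}\cup L$ with $-(-r)=r$, $-0=0$. Adjoin $\pm\infty$ with $-(+\infty)=-\infty$ and set $\bar L^\dagger=L^\dagger\cup\{\pm\infty\}$. Points of $U=(\bar L^\dagger)^3$ have coordinates $x,y,z$. The edgeless cube $Q_L$ is the set of points of $U$ with exactly one coordinate in $\{\pm\infty\}$ (cells). The edged cube $\bar Q_L$ is the set of cells $(p,i)$ with $p\in U$, $i\in\{x,y,z\}$, $p_i\in\{\pm\infty\}$ ($i$ marks the face). For $i\in\{x,y,z\}$, $\alpha\in\bar L^\dagger$, the quarter-turn twist $T_{i,\alpha}$ is the permutation of cells fixing every cell whose point $p$ has $p_i\ne\alpha$ and acting on the others by $T_{x,\alpha}(\alpha,y,z)=(\alpha,-z,y)$, $T_{y,\alpha}(x,\alpha,z)=(z,\alpha,-x)$, $T_{z,\alpha}(x,y,\alpha)=(-y,x,\alpha)$ (in $\bar Q_L$ the marked coordinate is carried along by the rotation). Basic twists are $T,T^2,T^3$ for quarter-turn twists $T$. A basic sequence is a sequence $\langle\sigma_\eta:\eta<\theta\rangle$ of basic twists of ordinal length $\theta$. A labelling is a map $f$ from cells to $X\cup\{\mathrm{NaC}\}$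 for a set $X\not\ni\mathrm{NaC}$; it is legal if it never takes value NaC; a configuration is a labelling with $X$ the six colors red, white, green, orange, yellow, blue. A twist $\sigma$ acts by $(\sigma f)(c)=f(\sigma^{-1}c)$. Applying $\vec\sigma=\langle\sigma_\eta:\eta<\theta\rangle$ to $f_0$ produces $f_{\eta+1}=\sigma_\eta f_\eta$, and for limit $\lambda\le\theta$, $f_\lambda(c)$ is the eventually constant value of $f_\eta(c)$ ($\eta<\lambda$) if it exists and NaC otherwise; the terminal labelling $f_\theta$ is denoted $\vec\sigma f_0$. $\vec\sigma$ is universally convergent if $\vec\sigma\,\mathrm{id}$ is legal, where $\mathrm{id}$ labels each cell by itself. $\vec\sigma\sim\vec\tau$ means $\vec\sigma f=\vec\tau f$ for every configuration $f$. *)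

theory Defs
  imports Main
begin

text \<open>The infinite set L is modelled by a type 'l (with an infiniteness assumption in
the theorem).  Neg r stands for -r, Zero for 0, PInf/MInf for plus/minus infinity.\<close>

datatype 'l coord = Neg 'l | Zero | Pos 'l | PInf | MInf

fun cneg :: "'l coord \<Rightarrow> 'l coord" where
  "cneg (Neg r) = Pos r"
| "cneg Zero = Zero"
| "cneg (Pos r) = Neg r"
| "cneg PInf = MInf"
| "cneg MInf = PInf"

definition isinf :: "'l coord \<Rightarrow> bool" where
  "isinf a \<longleftrightarrow> a = PInf \<or> a = MInf"

type_synonym 'l point = "'l coord \<times> 'l coord \<times> 'l coord"

datatype axis = AX | AY | AZ

fun getc :: "axis \<Rightarrow> 'l point \<Rightarrow> 'l coord" where
  "getc AX (x, y, z) = x"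
| "getc AY (x, y, z) = y"
| "getc AZ (x, y, z) = z"

fun rot :: "axis \<Rightarrow> 'l point \<Rightarrow> 'l point" where
  "rot AX (x, y, z) = (x, cneg z, y)"
| "rot AY (x, y, z) = (z, y, cneg x)"
| "rot AZ (x, y, z) = (cneg y, x, z)"

text \<open>How a rotation about axis j carries the marked coordinate (face marker).\<close>
fun rot_axis :: "axis \<Rightarrow> axis \<Rightarrow> axis" where
  "rot_axis AX AX = AX" | "rot_axis AX AY = AZ" | "rot_axis AX AZ = AY"
| "rot_axis AY AX = AZ" | "rot_axis AY AY = AY" | "rot_axis AY AZ = AX"
| "rot_axis AZ AX = AY" | "rot_axis AZ AY = AX" | "rot_axis AZ AZ = AZ"

definition edgeless_cells :: "'l point set" where
  "edgeless_cells = {p. length (filter isinf [getc AX p, getc AY p, getc AZ p]) = 1}"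

typedef 'l ecell = "edgeless_cells :: 'l point set"
  by (rule exI[of _ "(PInf, Zero, Zero)"]) (simp add: edgeless_cells_def isinf_def)

definition edged_cells :: "('l point \<times> axis) set" where
  "edged_cells = {(p, i). isinf (getc i p)}"

typedef 'l fcell = "edged_cells :: ('l point \<times> axis) set"
  by (rule exI[of _ "((PInf, Zero, Zero), AX)"]) (simp add: edged_cells_def isinf_def)

definition etwist :: "axis \<Rightarrow> 'l coord \<Rightarrow> 'l ecell \<Rightarrow> 'l ecell" where
  "etwist i a c = (let p = Rep_ecell c in
      if getc i p = a then Abs_ecell (rot i p) else c)"

definition ftwist :: "axis \<Rightarrow> 'l coord \<Rightarrow> 'l fcell \<Rightarrow> 'l fcell" where
  "ftwist i a c = (case Rep_fcell c of (p, j) \<Rightarrow>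
      if getc i p = a then Abs_fcell (rot i p, rot_axis i j) else c)"

datatype pw = P1 | P2 | P3

fun pw_nat :: "pw \<Rightarrow> nat" where
  "pw_nat P1 = 1" | "pw_nat P2 = 2" | "pw_nat P3 = 3"

text \<open>Basic twist BT i alpha k denotes T_{i,alpha}^k, k in {1,2,3}.\<close>
datatype 'l btwist = BT axis "'l coord" pw

text \<open>A labelling is a map cells => X option; None plays the role of NaC.
The generic machinery is parametrised by the quarter-turn twist action tw.\<close>

fun bt_perm :: "(axis \<Rightarrow> 'l coord \<Rightarrow> 'c \<Rightarrow> 'c) \<Rightarrow> 'l btwist \<Rightarrow> 'c \<Rightarrow> 'c" where
  "bt_perm tw (BT i a k) = (tw i a) ^^ pw_nat k"

definition act :: "(axis \<Rightarrow> 'l coord \<Rightarrow> 'c \<Rightarrow> 'c) \<Rightarrow> 'l btwist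
    \<Rightarrow> ('c \<Rightarrow> 'x option) \<Rightarrow> ('c \<Rightarrow> 'x option)" where
  "act tw s f = (\<lambda>c. f (inv (bt_perm tw s) c))"

definition is_pred :: "'o::wellorder \<Rightarrow> 'o \<Rightarrow> bool" where
  "is_pred z e \<longleftrightarrow> z < e \<and> \<not> (\<exists>x. z < x \<and> x < e)"

definition eventually_const :: "'o::wellorder \<Rightarrow> ('o \<Rightarrow> 'y) \<Rightarrow> 'y \<Rightarrow> bool" where
  "eventually_const lam g v \<longleftrightarrow> (\<exists>e0<lam. \<forall>x. e0 \<le> x \<and> x < lam \<longrightarrow> g x = v)"

definition run_step :: "(axis \<Rightarrow> 'l coord \<Rightarrow> 'c \<Rightarrow> 'c) \<Rightarrow> ('o::wellorder \<Rightarrow> 'l btwist)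
    \<Rightarrow> ('c \<Rightarrow> 'x option) \<Rightarrow> ('o \<Rightarrow> 'c \<Rightarrow> 'x option) \<Rightarrow> 'o \<Rightarrow> 'c \<Rightarrow> 'x option" where
  "run_step tw sig f0 F e =
     (if \<not> (\<exists>z. z < e) then f0
      else if (\<exists>z. is_pred z e) then
        (let z = (THE z. is_pred z e) in act tw (sig z) (F z))
      else (\<lambda>c. if (\<exists>v. eventually_const e (\<lambda>x. F x c) v)
                 then (THE v. eventually_const e (\<lambda>x. F x c) v) else None))"

text \<open>run tw sig f0 e is the labelling f_e obtained after the first e steps.\<close>
definition run :: "(axis \<Rightarrow> 'l coord \<Rightarrow> 'c \<Rightarrow> 'c) \<Rightarrow> ('o::wellorder \<Rightarrow> 'l btwist)
    \<Rightarrow> ('c \<Rightarrow> 'x option) \<Rightarrow> 'o \<Rightarrow> 'c \<Rightarrow> 'x option" where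
  "run tw sig f0 = wfrec {(a, b). a < b} (run_step tw sig f0)"

text \<open>The basic sequence is sig restricted to indices below theta (its length).\<close>
definition terminal :: "(axis \<Rightarrow> 'l coord \<Rightarrow> 'c \<Rightarrow> 'c) \<Rightarrow> ('o::wellorder \<Rightarrow> 'l btwist)
    \<Rightarrow> 'o \<Rightarrow> ('c \<Rightarrow> 'x option) \<Rightarrow> 'c \<Rightarrow> 'x option" where
  "terminal tw sig theta f0 = run tw sig f0 theta"

definition legal :: "('c \<Rightarrow> 'x option) \<Rightarrow> bool" where
  "legal f \<longleftrightarrow> (\<forall>c. f c \<noteq> None)"

definition univ_convergent :: "(axis \<Rightarrow> 'l coord \<Rightarrow> 'c \<Rightarrow> 'c) \<Rightarrow> ('o::wellorder \<Rightarrow> 'l btwist)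
    \<Rightarrow> 'o \<Rightarrow> bool" where
  "univ_convergent tw sig theta \<longleftrightarrow> legal (terminal tw sig theta (\<lambda>c. Some c))"

datatype color = Red | White | Green | Orange | Yellow | Blue

definition seq_equiv :: "(axis \<Rightarrow> 'l coord \<Rightarrow> 'c \<Rightarrow> 'c)
    \<Rightarrow> ('o1::wellorder \<Rightarrow> 'l btwist) \<Rightarrow> 'o1
    \<Rightarrow> ('o2::wellorder \<Rightarrow> 'l btwist) \<Rightarrow> 'o2 \<Rightarrow> bool" where
  "seq_equiv tw sig th tau th' \<longleftrightarrow>
     (\<forall>f :: 'c \<Rightarrow> color option. terminal tw sig th f = terminal tw tau th' f)"

end

(* Suppose the identity run of tau breaks down, and let lambda be the first stage at which some
   cell c reads NaC.  Then lambda is a limit, and every cell whose label passes through c before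
   lambda has the same set of absolute coordinate values as c; twists preserve this set and only
   finitely many cells share it.  Hence some cell d sits at c cofinally often below lambda, but
   not eventually, so colouring d red and every other cell white leaves c undefined at lambda.
   Such a NaC never disappears later, since at a limit one of the finitely many candidate cells
   must read NaC cofinally often.  So tau turns this colouring into an illegal labelling, while
   sigma does not because sigma id is legal, contradicting sigma ~ tau. *)

theory Submission imports Defs begin

definition is_limit :: "'o::wellorder \<Rightarrow> bool" where
  "is_limit e \<longleftrightarrow> (\<exists>z. z < e) \<and> \<not> (\<exists>z. is_pred z e)"

definition cofinally :: "'o::wellorder \<Rightarrow> ('o \<Rightarrow> bool) \<Rightarrow> bool" where
  "cofinally e P \<longleftrightarrow> (\<forall>b<e. \<exists>x. b \<le> x \<and> x < e \<and> P x)"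

lemma is_pred_less: "is_pred z e \<Longrightarrow> z < e"
  by (simp add: is_pred_def)

lemma is_pred_greatest: "is_pred z e \<Longrightarrow> y < e \<Longrightarrow> y \<le> z"
  unfolding is_pred_def using not_le by blast

lemma is_pred_unique: "is_pred z e \<Longrightarrow> is_pred z' e \<Longrightarrow> z = z'"
  by (meson antisym is_pred_greatest is_pred_less)

lemma ordinal_cases:
  fixes e :: "'o::wellorder"
  obtains "\<not> (\<exists>z. z < e)" | z where "is_pred z e" | "is_limit e"
  unfolding is_limit_def by blast

lemma eventually_const_unique:
  "eventually_const e g v \<Longrightarrow> eventually_const e g w \<Longrightarrow> v = w"
  unfolding eventually_const_def by (metis max.cobounded1 max.cobounded2 max_less_iff_conj)

lemma eventually_const_cofinally:
  assumes "eventually_const e g v" and "cofinally e (\<lambda>x. P (g x))"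
  shows "P v"
  using assms unfolding eventually_const_def cofinally_def by metis

lemma cofinally_mono:
  "cofinally e P \<Longrightarrow> (\<And>x. x < e \<Longrightarrow> P x \<Longrightarrow> Q x) \<Longrightarrow> cofinally e Q"
  unfolding cofinally_def by blast

lemma cofinally_value_in_finite:
  fixes e :: "'o::wellorder"
  assumes fin: "finite A" and "z0 < e" and range: "\<And>x. z0 \<le> x \<Longrightarrow> x < e \<Longrightarrow> g x \<in> A"
  shows "\<exists>a\<in>A. cofinally e (\<lambda>x. z0 \<le> x \<and> g x = a)"
proof (rule ccontr)
  assume "\<not> ?thesis"
  then obtain B where
    B: "\<And>a. a \<in> A \<Longrightarrow> B a < e \<and> (\<forall>x. B a \<le> x \<and> x < e \<longrightarrow> \<not> (z0 \<le> x \<and> g x = a))"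
    unfolding cofinally_def by metis
  define m where "m = Max (insert z0 (B ` A))"
  have "m < e" and "z0 \<le> m"
    using fin B \<open>z0 < e\<close> by (simp_all add: m_def)
  then have "g m \<in> A" by (intro range)
  then have "B (g m) \<le> m" using fin by (simp add: m_def)
  with B[OF \<open>g m \<in> A\<close>] \<open>m < e\<close> \<open>z0 \<le> m\<close> show False by blast
qed

lemma run_step_cong:
  assumes "\<And>x. x < e \<Longrightarrow> F x = G x"
  shows "run_step tw sig f0 F e = run_step tw sig f0 G e"
proof -
  have "eventually_const e (\<lambda>x. F x c) = eventually_const e (\<lambda>x. G x c)" for c
    using assms unfolding eventually_const_def by metis
  moreover have "(THE z. is_pred z e) = z \<and> F z = G z" if "is_pred z e" for z
    using that assms is_pred_unique is_pred_less by blast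
  ultimately show ?thesis
    unfolding run_step_def Let_def by (intro if_cong refl ext) auto
qed

lemma run_unfold: "run tw sig f0 e = run_step tw sig f0 (run tw sig f0) e"
proof -
  have "run tw sig f0 e = run_step tw sig f0 (cut (run tw sig f0) {(a, b). a < b} e) e"
    unfolding run_def by (rule wfrec[OF wf])
  also have "\<dots> = run_step tw sig f0 (run tw sig f0) e"
    by (rule run_step_cong) (simp add: cut_apply)
  finally show ?thesis .
qed

lemma run_bottom: "\<not> (\<exists>z. z < e) \<Longrightarrow> run tw sig f0 e = f0"
  by (subst run_unfold) (simp add: run_step_def)

lemma run_pred: "is_pred z e \<Longrightarrow> run tw sig f0 e = act tw (sig z) (run tw sig f0 z)"
  by (subst run_unfold)
    (auto simp add: run_step_def Let_def is_pred_unique the_equality dest: is_pred_less)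

lemma run_limit:
  "is_limit e \<Longrightarrow> run tw sig f0 e c =
     (if \<exists>v. eventually_const e (\<lambda>x. run tw sig f0 x c) v
      then THE v. eventually_const e (\<lambda>x. run tw sig f0 x c) v else None)"
  unfolding is_limit_def by (subst run_unfold) (simp add: run_step_def)

lemma run_limit_eventually_const:
  "is_limit e \<Longrightarrow> eventually_const e (\<lambda>x. run tw sig f0 x c) v \<Longrightarrow> run tw sig f0 e c = v"
  by (auto simp: run_limit eventually_const_unique)

lemma run_limit_Some:
  "is_limit e \<Longrightarrow> run tw sig f0 e c = Some d
     \<Longrightarrow> eventually_const e (\<lambda>x. run tw sig f0 x c) (Some d)"
  by (metis option.distinct(1) run_limit run_limit_eventually_const)

lemma run_limit_None_if_cofinally:
  assumes lim: "is_limit e" and cof: "cofinally e (\<lambda>x. run tw sig f0 x c = None)"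
  shows "run tw sig f0 e c = None"
proof (cases "\<exists>v. eventually_const e (\<lambda>x. run tw sig f0 x c) v")
  case True
  then obtain v where v: "eventually_const e (\<lambda>x. run tw sig f0 x c) v" ..
  have "v = None" using eventually_const_cofinally[OF v, where P = "\<lambda>y. y = None"] cof by simp
  with v show ?thesis by (simp add: run_limit_eventually_const[OF lim])
next
  case False
  then show ?thesis by (simp add: run_limit[OF lim])
qed

lemma run_via_identity:
  "run tw sig Some e c = Some d \<Longrightarrow> run tw sig f e c = f d"
proof (induction e arbitrary: c rule: less_induct)
  case (less e)
  show ?case
  proof (cases e rule: ordinal_cases)
    case 1
    then show ?thesis using less.prems by (simp add: run_bottom)
  next
    case (2 z)
    then show ?thesis
      using less.prems less.IH[OF is_pred_less[OF 2]] by (simp add: run_pred act_def)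
  next
    case 3
    obtain b where "b < e"
      and "\<And>x. b \<le> x \<Longrightarrow> x < e \<Longrightarrow> run tw sig Some x c = Some d"
      using run_limit_Some[OF 3 less.prems] unfolding eventually_const_def by blast
    then have "eventually_const e (\<lambda>x. run tw sig f x c) (f d)"
      using less.IH unfolding eventually_const_def by (meson order.strict_trans1)
    then show ?thesis by (rule run_limit_eventually_const[OF 3])
  qed
qed

lemma run_invariant_labelling:
  assumes "\<And>s. act tw s f0 = f0"
  shows "run tw sig f0 e = f0"
proof (induction e rule: less_induct)
  case (less e)
  show ?case
  proof (cases e rule: ordinal_cases)
    case 1
    then show ?thesis by (rule run_bottom)
  next
    case (2 z)
    then show ?thesis using less.IH[OF is_pred_less[OF 2]] assms by (simp add: run_pred)
  next
    case 3
    then obtain z where "z < e" unfolding is_limit_def by blast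
    have "eventually_const e (\<lambda>x. run tw sig f0 x c) (f0 c)" for c
      unfolding eventually_const_def using \<open>z < e\<close> less.IH by metis
    then show ?thesis by (intro ext run_limit_eventually_const[OF 3])
  qed
qed

lemma is_limit_first_illegal_stage:
  assumes "legal f0" and below: "\<And>x. x < e \<Longrightarrow> legal (run tw sig f0 x)"
    and "\<not> legal (run tw sig f0 e)"
  shows "is_limit e"
proof (cases e rule: ordinal_cases)
  case 1
  then show ?thesis using assms by (simp add: run_bottom)
next
  case (2 z)
  then have "legal (run tw sig f0 e)"
    using below[OF is_pred_less[OF 2]] by (simp add: run_pred act_def legal_def)
  then show ?thesis using assms by blast
qed

definition finite_invariant_key :: "(axis \<Rightarrow> 'l coord \<Rightarrow> 'c \<Rightarrow> 'c) \<Rightarrow> ('c \<Rightarrow> 'k) \<Rightarrow> bool" where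
  "finite_invariant_key tw key \<longleftrightarrow> (\<forall>i a. bij (tw i a)) \<and> (\<forall>i a c. key (tw i a c) = key c)
     \<and> (\<forall>c. finite {d. key d = key c})"

lemma bij_bt_perm: "finite_invariant_key tw key \<Longrightarrow> bij (bt_perm tw s)"
  by (cases s) (auto simp: finite_invariant_key_def)

lemma key_bt_perm: "finite_invariant_key tw key \<Longrightarrow> key (bt_perm tw s c) = key c"
proof (cases s)
  case (BT i a k)
  assume "finite_invariant_key tw key"
  then have "key ((tw i a ^^ n) c) = key c" for n
    by (induction n) (auto simp: finite_invariant_key_def)
  then show ?thesis using BT by simp
qed

lemma key_inv_bt_perm: "finite_invariant_key tw key \<Longrightarrow> key (inv (bt_perm tw s) c) = key c"
  by (metis bij_bt_perm key_bt_perm bij_inv_eq_iff)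

lemma run_identity_key:
  assumes K: "finite_invariant_key tw key" and "run tw sig Some e c = Some d"
  shows "key d = key c"
proof -
  have "act tw s (\<lambda>c. Some (key c)) = (\<lambda>c. Some (key c))" for s
    by (simp add: act_def key_inv_bt_perm[OF K])
  then have "run tw sig (\<lambda>c. Some (key c)) e c = Some (key c)"
    by (simp add: run_invariant_labelling)
  with run_via_identity[OF assms(2), of "\<lambda>c. Some (key c)"] show ?thesis by simp
qed

lemma run_None_persists:
  assumes K: "finite_invariant_key tw key" and "e0 \<le> e" and "run tw sig f e0 c0 = None"
  shows "\<exists>c. key c = key c0 \<and> run tw sig f e c = None"
  using \<open>e0 \<le> e\<close>
proof (induction e rule: less_induct)
  case (less e)
  show ?case
  proof (cases "e = e0")
    case True
    then show ?thesis using assms(3) by blast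
  next
    case False
    with less.prems have "e0 < e" by simp
    show ?thesis
    proof (cases e rule: ordinal_cases)
      case 1
      then show ?thesis using \<open>e0 < e\<close> by blast
    next
      case (2 z)
      obtain c where c: "key c = key c0" "run tw sig f z c = None"
        using less.IH[OF is_pred_less[OF 2] is_pred_greatest[OF 2 \<open>e0 < e\<close>]] by blast
      let ?p = "bt_perm tw (sig z)"
      have "inv ?p (?p c) = c" using bij_bt_perm[OF K] by (simp add: bij_is_inj)
      then have "run tw sig f e (?p c) = None" using c by (simp add: run_pred[OF 2] act_def)
      moreover have "key (?p c) = key c0" using c key_bt_perm[OF K] by simp
      ultimately show ?thesis by blast
    next
      case 3
      define h where "h x = (SOME c. key c = key c0 \<and> run tw sig f x c = None)" for x
      have h: "key (h x) = key c0 \<and> run tw sig f x (h x) = None" if "e0 \<le> x" "x < e" for x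
        unfolding h_def using less.IH[OF that(2,1)] by (rule someI_ex)
      have "finite {c. key c = key c0}" using K by (simp add: finite_invariant_key_def)
      moreover have "h x \<in> {c. key c = key c0}" if "e0 \<le> x" "x < e" for x
        using h[OF that] by simp
      ultimately obtain c where "key c = key c0" and c: "cofinally e (\<lambda>x. e0 \<le> x \<and> h x = c)"
        using cofinally_value_in_finite[OF _ \<open>e0 < e\<close>] by blast
      have "cofinally e (\<lambda>x. run tw sig f x c = None)"
      proof (rule cofinally_mono[OF c])
        fix x assume "x < e" and "e0 \<le> x \<and> h x = c"
        then show "run tw sig f x c = None" using h[of x] by auto
      qed
      then have "run tw sig f e c = None" by (rule run_limit_None_if_cofinally[OF 3])
      with \<open>key c = key c0\<close> show ?thesis by blast
    qed
  qed
qed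

lemma run_limit_None_two_colours:
  assumes K: "finite_invariant_key tw key" and lim: "is_limit e"
    and below: "\<And>x. x < e \<Longrightarrow> run tw sig Some x c \<noteq> None"
    and "run tw sig Some e c = None"
  shows "\<exists>f :: 'c \<Rightarrow> color option. legal f \<and> run tw sig f e c = None"
proof -
  define g where "g x = the (run tw sig Some x c)" for x
  have g: "run tw sig Some x c = Some (g x)" if "x < e" for x
    using below[OF that] by (auto simp: g_def)
  obtain z0 where "z0 < e" using lim unfolding is_limit_def by blast
  have "finite {d. key d = key c}" using K by (simp add: finite_invariant_key_def)
  then obtain d where d: "cofinally e (\<lambda>x. z0 \<le> x \<and> g x = d)"
    using cofinally_value_in_finite[OF _ \<open>z0 < e\<close>, of _ g] run_identity_key[OF K g] by blast
  define f where "f = (\<lambda>c. if c = d then Some Red else Some White)"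
  have fg: "run tw sig f x c = f (g x)" if "x < e" for x
    using run_via_identity[OF g[OF that]] .
  have "run tw sig f e c = None"
  proof (rule ccontr)
    assume "run tw sig f e c \<noteq> None"
    then obtain v where v: "eventually_const e (\<lambda>x. run tw sig f x c) (Some v)"
      using run_limit_Some[OF lim] by fastforce
    \<comment> \<open>\<open>d\<close> reaches \<open>c\<close> cofinally, so the limit colour is red,
      so \<open>d\<close> reaches \<open>c\<close> eventually.\<close>
    have "cofinally e (\<lambda>x. run tw sig f x c = Some Red)"
      using d by (rule cofinally_mono) (simp add: fg, simp add: f_def)
    with v have "v = Red" by (auto dest: eventually_const_cofinally)
    with v have "eventually_const e (\<lambda>x. run tw sig Some x c) (Some d)"
      unfolding eventually_const_def by (metis fg g f_def option.inject color.distinct(1))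
    then have "run tw sig Some e c = Some d" by (rule run_limit_eventually_const[OF lim])
    with \<open>run tw sig Some e c = None\<close> show False by simp
  qed
  moreover have "legal f" by (simp add: f_def legal_def)
  ultimately show ?thesis by blast
qed

theorem univ_convergent_if_seq_equiv:
  fixes sig :: "'o1::wellorder \<Rightarrow> 'l btwist" and tau :: "'o2::wellorder \<Rightarrow> 'l btwist"
    and tw :: "axis \<Rightarrow> 'l coord \<Rightarrow> 'c \<Rightarrow> 'c" and key :: "'c \<Rightarrow> 'k"
  assumes K: "finite_invariant_key tw key"
    and conv: "univ_convergent tw sig th" and equiv: "seq_equiv tw sig th tau th'"
  shows "univ_convergent tw tau th'"
proof (rule ccontr)
  assume "\<not> ?thesis"
  then have "\<not> legal (run tw tau Some th')" by (simp add: univ_convergent_def terminal_def)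
  define e0 where "e0 = (LEAST e. \<not> legal (run tw tau Some e))"
  have "\<not> legal (run tw tau Some e0)" and "e0 \<le> th'"
    unfolding e0_def using \<open>\<not> legal (run tw tau Some th')\<close> by (rule LeastI, rule Least_le)
  have below: "legal (run tw tau Some x)" if "x < e0" for x
    using not_less_Least[OF that[unfolded e0_def]] by blast
  have "is_limit e0"
    using below \<open>\<not> legal (run tw tau Some e0)\<close>
    by (intro is_limit_first_illegal_stage[of Some]) (simp add: legal_def)
  obtain c0 where "run tw tau Some e0 c0 = None"
    using \<open>\<not> legal (run tw tau Some e0)\<close> by (auto simp: legal_def)
  then obtain f :: "'c \<Rightarrow> color option" where "legal f" and "run tw tau f e0 c0 = None"
    using run_limit_None_two_colours[OF K \<open>is_limit e0\<close>] below by (metis legal_def)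
  then obtain c1 where "run tw tau f th' c1 = None"
    using run_None_persists[OF K \<open>e0 \<le> th'\<close>] by blast
  moreover obtain d where "run tw sig Some th c1 = Some d"
    using conv by (auto simp: univ_convergent_def terminal_def legal_def)
  then have "run tw sig f th c1 = f d" by (rule run_via_identity)
  moreover have "run tw sig f th = run tw tau f th'"
    using equiv by (simp add: seq_equiv_def terminal_def)
  ultimately show False using \<open>legal f\<close> unfolding legal_def by metis
qed

fun coord_abs :: "'l coord \<Rightarrow> 'l coord" where
  "coord_abs (Neg r) = Pos r"
| "coord_abs Zero = Zero"
| "coord_abs (Pos r) = Pos r"
| "coord_abs PInf = PInf"
| "coord_abs MInf = PInf"

fun abs_coords :: "'l point \<Rightarrow> 'l coord set" where
  "abs_coords (x, y, z) = {coord_abs x, coord_abs y, coord_abs z}"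

lemma coord_abs_cneg [simp]: "coord_abs (cneg v) = coord_abs v"
  by (cases v) auto

lemma cneg_cneg [simp]: "cneg (cneg v) = v"
  by (cases v) auto

lemma isinf_cneg [simp]: "isinf (cneg v) = isinf v"
  by (cases v) (auto simp: isinf_def)

lemma abs_coords_rot [simp]: "abs_coords (rot i p) = abs_coords p"
  by (cases i; cases p) auto

lemma getc_rot [simp]: "getc i (rot i p) = getc i p"
  by (cases i; cases p) auto

lemma rot_iterate_4: "rot i (rot i (rot i (rot i p))) = p"
  by (cases i; cases p) auto

lemma rot_axis_iterate_4: "rot_axis i (rot_axis i (rot_axis i (rot_axis i j))) = j"
  by (cases i; cases j) auto

lemma finite_same_abs_coords: "finite {p. abs_coords p = abs_coords q}"
proof -
  obtain x y z where q: "q = (x, y, z)" by (cases q)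
  define S where "S = abs_coords q \<union> cneg ` abs_coords q"
  have "v \<in> S" if "coord_abs v \<in> abs_coords q" for v
    using that by (cases v) (force simp: S_def)+
  then have "{p. abs_coords p = abs_coords q} \<subseteq> S \<times> S \<times> S"
    by (force simp: subset_iff)
  moreover have "finite S" by (simp add: S_def q)
  ultimately show ?thesis by (simp add: finite_subset)
qed

lemma bij_if_iterate_4_id: "(\<And>c. t (t (t (t c))) = c) \<Longrightarrow> bij t"
  by (rule o_bij[of "t \<circ> t \<circ> t"]) (auto simp: fun_eq_iff)

lemma edgeless_cells_iff: "(x, y, z) \<in> edgeless_cells \<longleftrightarrow>
    (isinf x \<and> \<not> isinf y \<and> \<not> isinf z) \<or> (\<not> isinf x \<and> isinf y \<and> \<not> isinf z)
    \<or> (\<not> isinf x \<and> \<not> isinf y \<and> isinf z)"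
  unfolding edgeless_cells_def by (cases "isinf x"; cases "isinf y"; cases "isinf z") simp_all

lemma rot_edgeless_cells: "p \<in> edgeless_cells \<Longrightarrow> rot i p \<in> edgeless_cells"
  by (cases i; cases p) (auto simp: edgeless_cells_iff)

lemma rot_edged_cells: "(p, j) \<in> edged_cells \<Longrightarrow> (rot i p, rot_axis i j) \<in> edged_cells"
  by (cases i; cases j; cases p) (auto simp: edged_cells_def)

lemma Rep_etwist: "Rep_ecell (etwist i a c) =
    (if getc i (Rep_ecell c) = a then rot i (Rep_ecell c) else Rep_ecell c)"
  unfolding etwist_def Let_def
  using Abs_ecell_inverse[OF rot_edgeless_cells[OF Rep_ecell[of c]]] by simp

lemma Rep_ftwist: "Rep_fcell (ftwist i a c) =
    (if getc i (fst (Rep_fcell c)) = a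
     then (rot i (fst (Rep_fcell c)), rot_axis i (snd (Rep_fcell c))) else Rep_fcell c)"
  using Abs_fcell_inverse[OF rot_edged_cells] Rep_fcell[of c]
  by (auto simp: ftwist_def split: prod.split)

lemma finite_invariant_key_etwist: "finite_invariant_key etwist (\<lambda>c. abs_coords (Rep_ecell c))"
  unfolding finite_invariant_key_def
proof (intro conjI allI)
  show "bij (etwist i a)" for i and a :: "'l coord"
    by (rule bij_if_iterate_4_id) (simp add: Rep_ecell_inject[symmetric] Rep_etwist rot_iterate_4)
  show "finite {d. abs_coords (Rep_ecell d) = abs_coords (Rep_ecell c)}" for c :: "'l ecell"
    using finite_vimageI[OF finite_same_abs_coords, of Rep_ecell]
    by (simp add: inj_def Rep_ecell_inject)
qed (simp add: Rep_etwist)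

lemma finite_invariant_key_ftwist:
  "finite_invariant_key ftwist (\<lambda>c. abs_coords (fst (Rep_fcell c)))"
  unfolding finite_invariant_key_def
proof (intro conjI allI)
  show "bij (ftwist i a :: 'l fcell \<Rightarrow> 'l fcell)" for i and a :: "'l coord"
    by (rule bij_if_iterate_4_id)
      (simp add: Rep_fcell_inject[symmetric] Rep_ftwist rot_iterate_4 rot_axis_iterate_4)
  have "finite (UNIV :: axis set)"
    by (rule finite_subset[of _ "{AX, AY, AZ}"]) (use axis.exhaust in blast, simp)
  show "finite {d. abs_coords (fst (Rep_fcell d)) = abs_coords (fst (Rep_fcell c))}"
    for c :: "'l fcell"
  proof -
    let ?P = "{p. abs_coords p = abs_coords (fst (Rep_fcell c))}"
    have "{d. abs_coords (fst (Rep_fcell d)) = abs_coords (fst (Rep_fcell c))}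
        = Rep_fcell -` (?P \<times> UNIV)"
      by (simp add: set_eq_iff mem_Times_iff)
    moreover have "inj Rep_fcell" by (simp add: inj_def Rep_fcell_inject)
    ultimately show ?thesis
      using finite_vimageI[OF finite_cartesian_product[OF finite_same_abs_coords
          \<open>finite (UNIV :: axis set)\<close>]]
      by metis
  qed
qed (simp add: Rep_ftwist)

theorem lemma3p7:
  fixes sig :: "'o1::wellorder \<Rightarrow> 'l btwist" and th :: 'o1
    and tau :: "'o2::wellorder \<Rightarrow> 'l btwist" and th' :: 'o2
  assumes "infinite (UNIV :: 'l set)"
  shows "(univ_convergent (etwist :: axis \<Rightarrow> 'l coord \<Rightarrow> 'l ecell \<Rightarrow> 'l ecell) sig th
            \<and> seq_equiv etwist sig th tau th'
            \<longrightarrow> univ_convergent etwist tau th')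
       \<and> (univ_convergent (ftwist :: axis \<Rightarrow> 'l coord \<Rightarrow> 'l fcell \<Rightarrow> 'l fcell) sig th
            \<and> seq_equiv ftwist sig th tau th'
            \<longrightarrow> univ_convergent ftwist tau th')"
  using univ_convergent_if_seq_equiv[OF finite_invariant_key_etwist]
    univ_convergent_if_seq_equiv[OF finite_invariant_key_ftwist]
  by blast

end
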